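(* Assume the standing setting and let $\epsilon>0$. If $|u^0_i-u^0_{i+1}|\le \epsilon/3^{M}$ for all $i\in\mathbb Z$, then for all $j\in\mathbb Z$ and all integers $0\le n\le N$, $$|w^{n+1}_j-w^n_j|\le \frac{\epsilon}{3^{N-n}},\qquad |w^n_j-w^n_{j+1}|\le \frac{\epsilon}{3^{N-n}} .$$
   Context: Standing setting. Let $F:\mathbb R\to\mathbb R$ be continuously differentiable. For a spatial step $\eta>0$, a time step $\tau>0$ and an initial sequence $(z^0_i)_{i\in\mathbb Z}$ of reals, the EFC (Euler forward in time, centered in space) scheme produces $(z^n_i)_{i\in\mathbb Z,\,n\in\mathbb N}$ by $z^{n+1}_i=z^n_i-F'(z^n_i)\frac{\tau}{2\eta}\,(z^n_{i+1}-z^n_{i-1})$. It satisfies the CFL condition if $|F'(z^n_i)|\,\tau/\eta\le 1$ for all $i\in\mathbb Z$, $n\in\mathbb N$. Fix $a\in\mathbb R$, $h>0$, $\Delta t>0$, an integer $N>1$ and an even integer $r\ge 2$; put $k=h/r$, $dt=\Delta t/r$, $M=Nr$. Let $u_0:\mathbb R\to\mathbb R$. The coarse solution $(w^n_j)$ is the EFC scheme with $\eta=h$, $\tau=\Delta t$, $w^0_j=u_0(a+jh)$; the fine solution $(u^n_i)$ is the EFC scheme with $\eta=k$, $\tau=dt$, $u^0_i=u_0(a+ik)$ (so $w^0_j=u^0_{jr}$). Both are assumed to satisfy the CFL condition. *)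

theory Defs
  imports "HOL-Analysis.Analysis"
begin

text \<open>EFC scheme (Euler forward in time, centered in space) for the flux F,
  spatial step eta, time step tau, initial sequence z0.
  efc F eta tau z0 n i is z^n_i.\<close>
fun efc :: "(real \<Rightarrow> real) \<Rightarrow> real \<Rightarrow> real \<Rightarrow> (int \<Rightarrow> real) \<Rightarrow> nat \<Rightarrow> int \<Rightarrow> real" where
  "efc F eta tau z0 0 i = z0 i"
| "efc F eta tau z0 (Suc n) i =
     efc F eta tau z0 n i
     - deriv F (efc F eta tau z0 n i) * (tau / (2 * eta))
       * (efc F eta tau z0 n (i + 1) - efc F eta tau z0 n (i - 1))"

definition efc_cfl :: "(real \<Rightarrow> real) \<Rightarrow> real \<Rightarrow> real \<Rightarrow> (int \<Rightarrow> real) \<Rightarrow> bool" where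
  "efc_cfl F eta tau z0 \<longleftrightarrow>
     (\<forall>n i. \<bar>deriv F (efc F eta tau z0 n i)\<bar> * tau / eta \<le> 1)"

end

theory Submission
  imports Defs
begin

(* Under the CFL condition the coefficient of the centered difference in the update has absolute
   value at most 1/2, so one time step moves each value by at most the largest spatial difference
   of the current profile; by the triangle inequality the spatial differences therefore at most
   triple in each step. The coarse initial differences are sums of r fine differences, hence at
   most r eps / 3^(N r) <= eps / 3^N, and after n steps at most eps / 3^(N - n). *)

lemma efc_Suc_diff_le:
  fixes z0 :: "int \<Rightarrow> real"
  assumes cfl: "efc_cfl F eta tau z0" and eta: "eta > 0" and tau: "tau \<ge> 0"
    and D: "\<forall>i. \<bar>efc F eta tau z0 n i - efc F eta tau z0 n (i + 1)\<bar> \<le> D"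
  shows "\<bar>efc F eta tau z0 (Suc n) j - efc F eta tau z0 n j\<bar> \<le> D"
proof -
  define c where "c = deriv F (efc F eta tau z0 n j) * (tau / (2 * eta))"
  have c_le: "\<bar>c\<bar> \<le> 1 / 2"
    using cfl eta tau unfolding efc_cfl_def c_def by (simp add: abs_mult field_simps)
  have centered_le: "\<bar>efc F eta tau z0 n (j + 1) - efc F eta tau z0 n (j - 1)\<bar> \<le> 2 * D"
    using D[rule_format, of "j - 1"] D[rule_format, of j] by simp
  have "\<bar>efc F eta tau z0 (Suc n) j - efc F eta tau z0 n j\<bar>
      = \<bar>c\<bar> * \<bar>efc F eta tau z0 n (j + 1) - efc F eta tau z0 n (j - 1)\<bar>"
    by (simp add: c_def abs_mult)
  also have "\<dots> \<le> 1 / 2 * (2 * D)"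
    by (rule mult_mono[OF c_le centered_le]) auto
  finally show ?thesis by simp
qed

lemma efc_spatial_diff_le:
  fixes z0 :: "int \<Rightarrow> real"
  assumes cfl: "efc_cfl F eta tau z0" and eta: "eta > 0" and tau: "tau \<ge> 0"
    and D: "\<forall>i. \<bar>z0 i - z0 (i + 1)\<bar> \<le> D"
  shows "\<bar>efc F eta tau z0 n j - efc F eta tau z0 n (j + 1)\<bar> \<le> 3 ^ n * D"
proof (induction n arbitrary: j)
  case 0
  then show ?case using D by simp
next
  case (Suc n)
  have step: "\<bar>efc F eta tau z0 (Suc n) i - efc F eta tau z0 n i\<bar> \<le> 3 ^ n * D" for i
    using efc_Suc_diff_le[OF cfl eta tau] Suc.IH by blast
  show ?case
    using step[of j] step[of "j + 1"] Suc.IH[of j] unfolding power_Suc mult.assoc by linarith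
qed

lemma abs_diff_telescope_le:
  fixes g :: "int \<Rightarrow> real"
  assumes "\<forall>i. \<bar>g i - g (i + 1)\<bar> \<le> e"
  shows "\<bar>g k - g (k + int m)\<bar> \<le> real m * e"
proof (induction m)
  case 0
  then show ?case by simp
next
  case (Suc m)
  have "\<bar>g (k + int m) - g (k + int m + 1)\<bar> \<le> e" using assms by blast
  with Suc show ?case by (simp add: algebra_simps)
qed

lemma abs_diff_subsample_le:
  fixes g :: "int \<Rightarrow> real"
  assumes "\<forall>i. \<bar>g i - g (i + 1)\<bar> \<le> e"
  shows "\<bar>g (j * int r) - g ((j + 1) * int r)\<bar> \<le> real r * e"
  using abs_diff_telescope_le[OF assms, of "j * int r" r] by (simp add: algebra_simps)

lemma mult_power_le_power_mult:
  fixes b N r :: nat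
  assumes b: "b \<ge> 2" and N: "N \<ge> 1"
  shows "r * b ^ N \<le> b ^ (N * r)"
proof (cases "r = 0")
  case False
  have "r \<le> 2 ^ (r - 1)"
    using less_exp[of "r - 1"] False by linarith
  also have "\<dots> \<le> b ^ (r - 1)"
    using b by (simp add: power_mono)
  also have "\<dots> \<le> b ^ (N * (r - 1))"
    using b N by (intro power_increasing) auto
  finally have "r * b ^ N \<le> b ^ (N * (r - 1)) * b ^ N"
    by simp
  also have "\<dots> = b ^ (N * r)"
    using False by (simp add: power_add[symmetric] algebra_simps)
  finally show ?thesis .
qed simp

theorem corollary1:
  fixes F :: "real \<Rightarrow> real" and u0 :: "real \<Rightarrow> real"
    and a h \<Delta>t \<epsilon> :: real and N r :: nat
  assumes F_diff: "\<forall>x. F differentiable (at x)"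
    and F_C1: "continuous_on UNIV (deriv F)"
    and h_pos: "h > 0" and dt_pos: "\<Delta>t > 0"
    and N_gt: "N > 1" and r_even: "even r" and r_ge: "r \<ge> 2"
    and cfl_coarse: "efc_cfl F h \<Delta>t (\<lambda>j. u0 (a + real_of_int j * h))"
    and cfl_fine: "efc_cfl F (h / real r) (\<Delta>t / real r) (\<lambda>i. u0 (a + real_of_int i * (h / real r)))"
    and eps_pos: "\<epsilon> > 0"
    and init: "\<forall>i. \<bar>u0 (a + real_of_int i * (h / real r)) - u0 (a + real_of_int (i + 1) * (h / real r))\<bar>
                   \<le> \<epsilon> / 3 ^ (N * r)"
  shows "\<forall>j n. n \<le> N \<longrightarrow>
           \<bar>efc F h \<Delta>t (\<lambda>j. u0 (a + real_of_int j * h)) (n + 1) j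
              - efc F h \<Delta>t (\<lambda>j. u0 (a + real_of_int j * h)) n j\<bar> \<le> \<epsilon> / 3 ^ (N - n)
         \<and> \<bar>efc F h \<Delta>t (\<lambda>j. u0 (a + real_of_int j * h)) n j
              - efc F h \<Delta>t (\<lambda>j. u0 (a + real_of_int j * h)) n (j + 1)\<bar> \<le> \<epsilon> / 3 ^ (N - n)"
proof -
  define z0 where "z0 = (\<lambda>j::int. u0 (a + real_of_int j * h))"
  define \<delta> where "\<delta> = real r * (\<epsilon> / 3 ^ (N * r))"
  have init_coarse: "\<forall>i. \<bar>z0 i - z0 (i + 1)\<bar> \<le> \<delta>"
  proof
    fix i :: int
    have "r \<noteq> 0" using r_ge by simp
    then show "\<bar>z0 i - z0 (i + 1)\<bar> \<le> \<delta>"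
      using abs_diff_subsample_le[OF init, of i r] by (simp add: z0_def \<delta>_def)
  qed
  have spatial: "\<bar>efc F h \<Delta>t z0 n i - efc F h \<Delta>t z0 n (i + 1)\<bar> \<le> 3 ^ n * \<delta>" for n i
    using efc_spatial_diff_le[OF cfl_coarse[folded z0_def] h_pos _ init_coarse] dt_pos by simp
  have temporal: "\<bar>efc F h \<Delta>t z0 (n + 1) i - efc F h \<Delta>t z0 n i\<bar> \<le> 3 ^ n * \<delta>" for n i
    using efc_Suc_diff_le[OF cfl_coarse[folded z0_def] h_pos _] spatial dt_pos by simp
  have "real (r * 3 ^ N) \<le> real (3 ^ (N * r))"
    using N_gt by (intro of_nat_mono mult_power_le_power_mult) auto
  then have growth_le: "3 ^ n * \<delta> \<le> \<epsilon> / 3 ^ (N - n)" if "n \<le> N" for n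
    using that eps_pos by (simp add: \<delta>_def field_simps power_add[symmetric])
  show ?thesis
    using spatial temporal growth_le unfolding z0_def by (meson order_trans)
qed

end
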